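(* Fix $n\ge2$ and $B>0$. Let $\pi_0$ be any prior distribution on $\Theta(B)$; draw $(\tau,\mu_{\mathrm{L}},\mu_{\mathrm{R}})\sim\pi_0$, $\boldsymbol{X}\sim P(n,\tau,\mu_{\mathrm{L}},\mu_{\mathrm{R}})$, and define $Y=\mathbb{1}\{\mu_{\mathrm{L}}\ne\mu_{\mathrm{R}}\}$. Then for $\lambda^*=B\sqrt{3n}/6$, the classifier $h^{\mathrm{CUSUM}_*}_{\lambda^*}(\boldsymbol{x})=\mathbb{1}\{\max_{t\in T_0}|\boldsymbol{v}_t^\top\boldsymbol{x}|>\lambda^*\}$ satisfies $\mathbb{P}(h^{\mathrm{CUSUM}_*}_{\lambda^*}(\boldsymbol{X})\ne Y)\le 2\lfloor\log_2(n)\rfloor e^{-nB^2/24}$.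
   Context: $P(n,\tau,\mu_{\mathrm{L}},\mu_{\mathrm{R}})$ is the law of $N_n(\boldsymbol{\mu},I_n)$ with $\mu_i=\mu_{\mathrm{L}}\mathbb{1}\{i\le\tau\}+\mu_{\mathrm{R}}\mathbb{1}\{i>\tau\}$. $\Theta(B)=\{(\tau,\mu_{\mathrm{L}},\mu_{\mathrm{R}})\in[n-1]\times\mathbb{R}^2:|\mu_{\mathrm{L}}-\mu_{\mathrm{R}}|\sqrt{\tau(n-\tau)}/n\in\{0\}\cup(B,\infty)\}$. For $t\in[n-1]$, $\boldsymbol{v}_t=\bigl(\sqrt{\tfrac{n-t}{tn}}\boldsymbol{1}_t^\top,-\sqrt{\tfrac{t}{(n-t)n}}\boldsymbol{1}_{n-t}^\top\bigr)^\top$. With $Q=\lfloor\log_2(n/2)\rfloor$, $T_0=\{2^q:0\le q\le Q\}\cup\{n-2^q:0\le q\le Q\}$. *)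

theory Defs
  imports "HOL-Probability.Probability"
begin

text \<open>Parameters theta = (tau, muL, muR). Observations x :: nat => real indexed by {1..n}.\<close>

type_synonym param = "nat \<times> real \<times> real"

definition mean_vec :: "param \<Rightarrow> nat \<Rightarrow> real" where
  "mean_vec \<theta> i = (case \<theta> of (\<tau>, muL, muR) \<Rightarrow> if i \<le> \<tau> then muL else muR)"

definition obs_space :: "nat \<Rightarrow> (nat \<Rightarrow> real) measure" where
  "obs_space n = PiM {1..n} (\<lambda>_. borel)"

definition Pcp :: "nat \<Rightarrow> param \<Rightarrow> (nat \<Rightarrow> real) measure" where
  "Pcp n \<theta> = PiM {1..n} (\<lambda>i. density lborel (normal_density (mean_vec \<theta> i) 1))"

definition param_space :: "param measure" where
  "param_space = count_space UNIV \<Otimes>\<^sub>M (borel \<Otimes>\<^sub>M borel)"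

definition Theta :: "nat \<Rightarrow> real \<Rightarrow> param set" where
  "Theta n B = {(\<tau>, muL, muR). \<tau> \<in> {1..n-1} \<and>
      (let s = \<bar>muL - muR\<bar> * sqrt (real \<tau> * real (n - \<tau>)) / real n in s = 0 \<or> s > B)}"

definition vdot :: "nat \<Rightarrow> nat \<Rightarrow> (nat \<Rightarrow> real) \<Rightarrow> real" where
  "vdot n t x = (\<Sum>i=1..t. sqrt (real (n - t) / (real t * real n)) * x i)
              - (\<Sum>i=t+1..n. sqrt (real t / (real (n - t) * real n)) * x i)"

definition Qn :: "nat \<Rightarrow> nat" where
  "Qn n = nat \<lfloor>log 2 (real n / 2)\<rfloor>"

definition T0 :: "nat \<Rightarrow> nat set" where
  "T0 n = {2 ^ q | q. q \<le> Qn n} \<union> {n - 2 ^ q | q. q \<le> Qn n}"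

definition h_cusum :: "nat \<Rightarrow> real \<Rightarrow> (nat \<Rightarrow> real) \<Rightarrow> bool" where
  "h_cusum n lam x = (Max ((\<lambda>t. \<bar>vdot n t x\<bar>) ` T0 n) > lam)"

definition label :: "param \<Rightarrow> bool" where
  "label \<theta> = (case \<theta> of (\<tau>, muL, muR) \<Rightarrow> muL \<noteq> muR)"

definition joint :: "nat \<Rightarrow> param measure \<Rightarrow> (param \<times> (nat \<Rightarrow> real)) measure" where
  "joint n \<pi>0 = \<pi>0 \<bind> (\<lambda>\<theta>. distr (Pcp n \<theta>) (\<pi>0 \<Otimes>\<^sub>M obs_space n) (\<lambda>x. (\<theta>, x)))"

end

(*
  Under P(n, theta) the observation is X = mu + Z with Z standard Gaussian noise, so
  v_t' X = v_t' mu + v_t' Z, where v_t' Z is standard normal because v_t is a unit vector,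
  and P(|v_t' Z| > lam) <= exp(-lam^2/2).  Without a change v_t' mu = 0 for every t, and a
  union bound over the |T0| <= 2 floor(log2 n) statistics bounds the false alarm.  With a
  change at tau of normalised size > B, the dyadic t with t <= tau < 2t (or its mirror
  image when tau > n/2) keeps a third of the optimal squared contrast:
  (v_t' mu)^2 >= (muL - muR)^2 tau (n - tau) / (3n) > (2 lam)^2 for lam = B sqrt(3n)/6,
  so a miss forces |v_t' Z| > lam.  Both bounds hold uniformly in theta, hence after
  averaging over the prior, and exp(-lam^2/2) = exp(-n B^2/24).
*)
theory Submission
  imports Defs
begin

section \<open>Gaussian tails\<close>

lemma std_normal_density_le_shifted:
  assumes "0 \<le> c" "c \<le> \<bar>x\<bar>"
  shows "std_normal_density x \<le> exp (- c\<^sup>2 / 2) * std_normal_density (\<bar>x\<bar> - c)"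
proof -
  have "c\<^sup>2 \<le> c * \<bar>x\<bar>"
    using assms by (simp add: power2_eq_square mult_left_mono)
  moreover have "(\<bar>x\<bar> - c)\<^sup>2 = x\<^sup>2 - 2 * c * \<bar>x\<bar> + c\<^sup>2"
    by (simp add: power2_diff)
  ultimately have "- x\<^sup>2 / 2 \<le> - c\<^sup>2 / 2 + - (\<bar>x\<bar> - c)\<^sup>2 / 2"
    by linarith
  then have "exp (- x\<^sup>2 / 2) \<le> exp (- c\<^sup>2 / 2) * exp (- (\<bar>x\<bar> - c)\<^sup>2 / 2)"
    by (simp flip: exp_add)
  then show ?thesis
    by (simp add: std_normal_density_def divide_right_mono)
qed

lemma std_normal_tail_le:
  assumes "0 \<le> c"
  shows "(\<integral>\<^sup>+x\<in>{x. c < \<bar>x\<bar>}. std_normal_density x \<partial>lborel) \<le> exp (- c\<^sup>2 / 2)"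
proof -
  define pos where "pos y = ennreal (std_normal_density y) * indicator {0<..} y" for y :: real
  define neg where "neg y = ennreal (std_normal_density y) * indicator {..<0} y" for y :: real
  have [measurable]: "pos \<in> borel_measurable borel" "neg \<in> borel_measurable borel"
    unfolding pos_def neg_def by measurable
  have reflect: "std_normal_density (- x - c) = std_normal_density (c + x)" for x
  proof -
    have "- x - c = - (c + x)"
      by simp
    then show ?thesis
      by (simp only: std_normal_density_def power2_minus)
  qed
  \<comment> \<open>the two tails, each moved back to the origin, fit together under one standard normal density\<close>
  have folded: "ennreal (std_normal_density (\<bar>x\<bar> - c)) * indicator {x. c < \<bar>x\<bar>} x
      = pos (- c + 1 * x) + neg (c + 1 * x)" for x
    using assms by (auto simp: pos_def neg_def indicator_def reflect)
  have "(\<integral>\<^sup>+x\<in>{x. c < \<bar>x\<bar>}. std_normal_density x \<partial>lborel)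
      \<le> (\<integral>\<^sup>+x. ennreal (exp (- c\<^sup>2 / 2)) *
            (ennreal (std_normal_density (\<bar>x\<bar> - c)) * indicator {x. c < \<bar>x\<bar>} x) \<partial>lborel)"
    using std_normal_density_le_shifted[OF assms]
    by (intro nn_integral_mono) (auto simp: ennreal_mult[symmetric] indicator_def intro: ennreal_leI)
  also have "\<dots> = (\<integral>\<^sup>+x. exp (- c\<^sup>2 / 2) * (pos (- c + 1 * x) + neg (c + 1 * x)) \<partial>lborel)"
    by (simp only: folded)
  also have "\<dots> = exp (- c\<^sup>2 / 2) * ((\<integral>\<^sup>+x. pos x \<partial>lborel) + (\<integral>\<^sup>+x. neg x \<partial>lborel))"
    using nn_integral_real_affine[of pos 1 "- c"] nn_integral_real_affine[of neg 1 c]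
    by (simp add: nn_integral_cmult nn_integral_add)
  also have "(\<integral>\<^sup>+x. pos x \<partial>lborel) + (\<integral>\<^sup>+x. neg x \<partial>lborel)
      \<le> (\<integral>\<^sup>+x. std_normal_density x \<partial>lborel)"
    by (auto simp: nn_integral_add[symmetric] pos_def neg_def indicator_def intro!: nn_integral_mono)
  also have "(\<integral>\<^sup>+x. std_normal_density x \<partial>lborel) = 1"
    by (subst nn_integral_eq_integral) auto
  finally show ?thesis
    by (simp add: mult_left_mono)
qed

section \<open>Independent Gaussian noise\<close>

lemma distr_PiM_componentwise:
  assumes "finite I" and M: "\<And>i. prob_space (M i)"
    and f[measurable]: "\<And>i. f i \<in> measurable (M i) (N i)"
  shows "distr (PiM I M) (PiM I N) (\<lambda>x. \<lambda>i\<in>I. f i (x i)) = PiM I (\<lambda>i. distr (M i) (N i) (f i))"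
proof -
  interpret M: product_prob_space M
    by (rule product_prob_spaceI) (rule M)
  interpret MN: product_prob_space "\<lambda>i. distr (M i) (N i) (f i)"
    by (rule product_prob_spaceI) (simp add: M prob_space.prob_space_distr)
  have [measurable]: "(\<lambda>x. \<lambda>i\<in>I. f i (x i)) \<in> measurable (PiM I M) (PiM I N)"
    by (intro measurable_restrict) simp
  show ?thesis
  proof (rule MN.PiM_eqI[OF \<open>finite I\<close>])
    show "sets (distr (PiM I M) (PiM I N) (\<lambda>x. \<lambda>i\<in>I. f i (x i))) = sets (PiM I (\<lambda>i. distr (M i) (N i) (f i)))"
      by (auto intro!: sets_PiM_cong)
  next
    fix A assume A: "\<And>i. i \<in> I \<Longrightarrow> A i \<in> sets (distr (M i) (N i) (f i))"
    have "(\<lambda>x. \<lambda>i\<in>I. f i (x i)) -` Pi\<^sub>E I A \<inter> space (PiM I M)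
        = Pi\<^sub>E I (\<lambda>i. f i -` A i \<inter> space (M i))"
      by (auto simp: space_PiM PiE_def Pi_def extensional_def)
    moreover have "Pi\<^sub>E I A \<in> sets (PiM I N)"
      using A by (intro sets_PiM_I_finite \<open>finite I\<close>) auto
    ultimately show "emeasure (distr (PiM I M) (PiM I N) (\<lambda>x. \<lambda>i\<in>I. f i (x i))) (Pi\<^sub>E I A)
        = (\<Prod>i\<in>I. emeasure (distr (M i) (N i) (f i)) (A i))"
      using A by (simp add: emeasure_distr M.emeasure_PiM[OF \<open>finite I\<close>] measurable_sets)
  qed
qed

lemma prob_space_std_normal_distribution: "prob_space std_normal_distribution"
  by (rule prob_space_normal_density) simp

definition std_gauss_noise :: "'i set \<Rightarrow> ('i \<Rightarrow> real) measure" where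
  "std_gauss_noise I = PiM I (\<lambda>_. std_normal_distribution)"

lemma prob_space_std_gauss_noise: "prob_space (std_gauss_noise I)"
  unfolding std_gauss_noise_def by (intro prob_space_PiM prob_space_std_normal_distribution)

lemma distr_std_normal_translate:
  "distr std_normal_distribution borel (\<lambda>x. x + m) = density lborel (normal_density m 1)"
proof -
  interpret prob_space std_normal_distribution
    by (rule prob_space_std_normal_distribution)
  have "distributed std_normal_distribution lborel (\<lambda>x. x) std_normal_density"
    by (simp add: distributed_def distr_id2)
  then have "distributed std_normal_distribution lborel (\<lambda>x. m + 1 * x) (normal_density m 1)"
    using normal_density_affine[of "\<lambda>x. x" 0 1 1 m] by simp
  then show ?thesis
    by (simp add: distributed_def add.commute cong: distr_cong)
qed

definition signal_plus_noise :: "nat \<Rightarrow> param \<Rightarrow> (nat \<Rightarrow> real) \<Rightarrow> (nat \<Rightarrow> real)" where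
  "signal_plus_noise n \<theta> z = (\<lambda>i\<in>{1..n}. z i + mean_vec \<theta> i)"

lemma measurable_signal_plus_noise[measurable]:
  "signal_plus_noise n \<theta> \<in> measurable (std_gauss_noise {1..n}) (obs_space n)"
  unfolding signal_plus_noise_def std_gauss_noise_def obs_space_def
  by (intro measurable_restrict) simp

lemma Pcp_eq_distr_signal_plus_noise:
  "Pcp n \<theta> = distr (std_gauss_noise {1..n}) (obs_space n) (signal_plus_noise n \<theta>)"
  unfolding Pcp_def std_gauss_noise_def obs_space_def signal_plus_noise_def
  by (subst distr_PiM_componentwise) (auto simp: prob_space_normal_density distr_std_normal_translate)

(* The weights are required to be nonzero only because the library's affine rule for
   normal densities excludes the factor 0. *)
lemma std_gauss_noise_linear_distributed:
  assumes I: "finite I" "I \<noteq> {}" and w: "\<And>i. i \<in> I \<Longrightarrow> w i \<noteq> 0" "(\<Sum>i\<in>I. (w i)\<^sup>2) = 1"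
  shows "distributed (std_gauss_noise I) lborel (\<lambda>z. \<Sum>i\<in>I. w i * z i) std_normal_density"
proof -
  interpret Z: prob_space "std_gauss_noise I"
    by (rule prob_space_std_gauss_noise)
  have coord[measurable]: "(\<lambda>z. z i) \<in> measurable (std_gauss_noise I) std_normal_distribution"
    if "i \<in> I" for i
    unfolding std_gauss_noise_def using that by (rule measurable_component_singleton)
  have coord_distr: "distr (std_gauss_noise I) std_normal_distribution (\<lambda>z. z i)
      = std_normal_distribution" if "i \<in> I" for i
    unfolding std_gauss_noise_def using that by (intro distr_PiM_component prob_space_std_normal_distribution)
  have coord_std_normal: "distributed (std_gauss_noise I) lborel (\<lambda>z. z i) std_normal_density"
    if "i \<in> I" for i
    using coord[OF that] coord_distr[OF that]
    by (simp add: distributed_def cong: distr_cong measurable_cong_sets)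
  have "Z.indep_vars (\<lambda>_. std_normal_distribution) (\<lambda>i z. z i) I"
  proof (subst Z.indep_vars_iff_distr_eq_PiM'[OF I(2) coord])
    have "distr (std_gauss_noise I) (\<Pi>\<^sub>M i\<in>I. std_normal_distribution) (\<lambda>z. \<lambda>i\<in>I. z i)
        = distr (std_gauss_noise I) (std_gauss_noise I) (\<lambda>z. z)"
      by (rule distr_cong) (auto simp: std_gauss_noise_def space_PiM)
    also have "\<dots> = (\<Pi>\<^sub>M i\<in>I. distr (std_gauss_noise I) std_normal_distribution (\<lambda>z. z i))"
      by (simp add: coord_distr cong: PiM_cong) (simp add: std_gauss_noise_def)
    finally show "distr (std_gauss_noise I) (\<Pi>\<^sub>M i\<in>I. std_normal_distribution) (\<lambda>z. \<lambda>i\<in>I. z i)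
        = (\<Pi>\<^sub>M i\<in>I. distr (std_gauss_noise I) std_normal_distribution (\<lambda>z. z i))" .
  qed
  then have "Z.indep_vars (\<lambda>_. borel) (\<lambda>i z. 0 + w i * z i) I"
    by (rule Z.indep_vars_compose2) simp
  then have "distributed (std_gauss_noise I) lborel (\<lambda>z. \<Sum>i\<in>I. 0 + w i * z i)
      (normal_density (\<Sum>i\<in>I. 0 + w i * 0) (sqrt (\<Sum>i\<in>I. (\<bar>w i\<bar> * 1)\<^sup>2)))"
    using w(1) by (intro Z.sum_indep_normal I Z.normal_density_affine coord_std_normal) auto
  then show ?thesis
    using w(2) by simp
qed

lemma std_gauss_noise_linear_tail:
  assumes "finite I" "I \<noteq> {}" "\<And>i. i \<in> I \<Longrightarrow> w i \<noteq> 0" "(\<Sum>i\<in>I. (w i)\<^sup>2) = 1" and "0 \<le> c"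
  shows "emeasure (std_gauss_noise I) {z \<in> space (std_gauss_noise I). c < \<bar>\<Sum>i\<in>I. w i * z i\<bar>}
    \<le> exp (- c\<^sup>2 / 2)"
proof -
  have "emeasure (std_gauss_noise I) {z \<in> space (std_gauss_noise I). c < \<bar>\<Sum>i\<in>I. w i * z i\<bar>}
      = (\<integral>\<^sup>+x\<in>{x. c < \<bar>x\<bar>}. std_normal_density x \<partial>lborel)"
    using distributed_emeasure[OF std_gauss_noise_linear_distributed[OF assms(1-4)], of "{x. c < \<bar>x\<bar>}"]
    by (simp add: vimage_def Int_def conj_commute)
  then show ?thesis
    using std_normal_tail_le[OF \<open>0 \<le> c\<close>] by simp
qed

section \<open>CUSUM contrasts\<close>

definition cusum_weight :: "nat \<Rightarrow> nat \<Rightarrow> nat \<Rightarrow> real" where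
  "cusum_weight n t i =
     (if i \<le> t then sqrt (real (n - t) / (real t * real n)) else - sqrt (real t / (real (n - t) * real n)))"

lemma vdot_eq_sum_cusum_weight:
  assumes "t \<le> n"
  shows "vdot n t x = (\<Sum>i\<in>{1..n}. cusum_weight n t i * x i)"
proof -
  have "(\<Sum>i\<in>{1..n}. cusum_weight n t i * x i)
      = (\<Sum>i\<in>{1..t}. cusum_weight n t i * x i) + (\<Sum>i\<in>{t+1..n}. cusum_weight n t i * x i)"
    using sum.ub_add_nat[of 1 t "\<lambda>i. cusum_weight n t i * x i" "n - t"] assms by simp
  also have "(\<Sum>i\<in>{1..t}. cusum_weight n t i * x i) = (\<Sum>i=1..t. sqrt (real (n - t) / (real t * real n)) * x i)"
    by (intro sum.cong) (auto simp: cusum_weight_def)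
  also have "(\<Sum>i\<in>{t+1..n}. cusum_weight n t i * x i) = - (\<Sum>i=t+1..n. sqrt (real t / (real (n - t) * real n)) * x i)"
    by (subst sum_negf[symmetric], intro sum.cong) (auto simp: cusum_weight_def)
  finally show ?thesis
    by (simp add: vdot_def)
qed

lemma sum_cusum_weight_squared:
  assumes "1 \<le> t" "t < n"
  shows "(\<Sum>i\<in>{1..n}. (cusum_weight n t i)\<^sup>2) = 1"
proof -
  have "(\<Sum>i\<in>{1..n}. (cusum_weight n t i)\<^sup>2)
      = (\<Sum>i\<in>{1..t}. (cusum_weight n t i)\<^sup>2) + (\<Sum>i\<in>{t+1..n}. (cusum_weight n t i)\<^sup>2)"
    using sum.ub_add_nat[of 1 t "\<lambda>i. (cusum_weight n t i)\<^sup>2" "n - t"] assms by simp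
  also have "(\<Sum>i\<in>{1..t}. (cusum_weight n t i)\<^sup>2) = real t * (real (n - t) / (real t * real n))"
    by (subst sum.cong[of _ _ _ "\<lambda>_. real (n - t) / (real t * real n)"]) (auto simp: cusum_weight_def)
  also have "(\<Sum>i\<in>{t+1..n}. (cusum_weight n t i)\<^sup>2) = real (n - t) * (real t / (real (n - t) * real n))"
    by (subst sum.cong[of _ _ _ "\<lambda>_. real t / (real (n - t) * real n)"]) (auto simp: cusum_weight_def)
  finally show ?thesis
    using assms by (simp add: field_simps)
qed

lemma cusum_weight_nonzero: "1 \<le> t \<Longrightarrow> t < n \<Longrightarrow> cusum_weight n t i \<noteq> 0"
  by (auto simp: cusum_weight_def)

lemma vdot_signal_plus_noise:
  assumes "t \<le> n"
  shows "vdot n t (signal_plus_noise n \<theta> z) = vdot n t z + vdot n t (mean_vec \<theta>)"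
  by (simp add: vdot_eq_sum_cusum_weight[OF assms] signal_plus_noise_def distrib_left sum.distrib)

lemma cusum_noise_tail:
  assumes "1 \<le> t" "t < n" "0 \<le> c"
  shows "emeasure (std_gauss_noise {1..n}) {z \<in> space (std_gauss_noise {1..n}). c < \<bar>vdot n t z\<bar>}
    \<le> exp (- c\<^sup>2 / 2)"
proof -
  have "{z \<in> space (std_gauss_noise {1..n}). c < \<bar>vdot n t z\<bar>}
      = {z \<in> space (std_gauss_noise {1..n}). c < \<bar>\<Sum>i\<in>{1..n}. cusum_weight n t i * z i\<bar>}"
    using assms by (simp add: vdot_eq_sum_cusum_weight)
  also have "emeasure (std_gauss_noise {1..n}) \<dots> \<le> exp (- c\<^sup>2 / 2)"
    using assms sum_cusum_weight_squared[OF assms(1,2)] cusum_weight_nonzero[OF assms(1,2)]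
    by (intro std_gauss_noise_linear_tail) auto
  finally show ?thesis .
qed

lemma cusum_weight_balance:
  assumes "1 \<le> t" "t < n"
  shows "real t * sqrt (real (n - t) / (real t * real n)) = real (n - t) * sqrt (real t / (real (n - t) * real n))"
proof -
  have "(real t)\<^sup>2 * (real (n - t) / (real t * real n)) = (real (n - t))\<^sup>2 * (real t / (real (n - t) * real n))"
    using assms by (simp add: power2_eq_square field_simps)
  then have "sqrt ((real t)\<^sup>2 * (real (n - t) / (real t * real n)))
      = sqrt ((real (n - t))\<^sup>2 * (real t / (real (n - t) * real n)))"
    by (rule arg_cong)
  then show ?thesis
    unfolding real_sqrt_mult by simp
qed

lemma vdot_mean_vec_before_change:
  assumes "1 \<le> t" "t \<le> \<tau>" "\<tau> \<le> n" "t < n"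
  shows "vdot n t (mean_vec (\<tau>, a, b)) = (a - b) * real (n - \<tau>) * sqrt (real t / (real (n - t) * real n))"
proof -
  define \<alpha> where "\<alpha> = sqrt (real (n - t) / (real t * real n))"
  define \<beta> where "\<beta> = sqrt (real t / (real (n - t) * real n))"
  have balance: "real t * \<alpha> = real (n - t) * \<beta>"
    unfolding \<alpha>_def \<beta>_def using cusum_weight_balance assms by simp
  have left: "(\<Sum>i=1..t. \<alpha> * mean_vec (\<tau>, a, b) i) = real t * \<alpha> * a"
    using assms by (subst sum.cong[of _ _ _ "\<lambda>_. \<alpha> * a"]) (auto simp: mean_vec_def)
  have "(\<Sum>i=t+1..n. \<beta> * mean_vec (\<tau>, a, b) i)
      = (\<Sum>i=t+1..\<tau>. \<beta> * mean_vec (\<tau>, a, b) i) + (\<Sum>i=\<tau>+1..n. \<beta> * mean_vec (\<tau>, a, b) i)"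
    using sum.ub_add_nat[of "t+1" \<tau> "\<lambda>i. \<beta> * mean_vec (\<tau>, a, b) i" "n - \<tau>"] assms by simp
  also have "(\<Sum>i=t+1..\<tau>. \<beta> * mean_vec (\<tau>, a, b) i) = real (\<tau> - t) * \<beta> * a"
    by (subst sum.cong[of _ _ _ "\<lambda>_. \<beta> * a"]) (auto simp: mean_vec_def)
  also have "(\<Sum>i=\<tau>+1..n. \<beta> * mean_vec (\<tau>, a, b) i) = real (n - \<tau>) * \<beta> * b"
    by (subst sum.cong[of _ _ _ "\<lambda>_. \<beta> * b"]) (auto simp: mean_vec_def)
  finally have right: "(\<Sum>i=t+1..n. \<beta> * mean_vec (\<tau>, a, b) i)
      = real (\<tau> - t) * \<beta> * a + real (n - \<tau>) * \<beta> * b" .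
  have "vdot n t (mean_vec (\<tau>, a, b))
      = real (n - t) * \<beta> * a - (real (\<tau> - t) * \<beta> * a + real (n - \<tau>) * \<beta> * b)"
    unfolding vdot_def left right \<alpha>_def[symmetric] \<beta>_def[symmetric] balance ..
  also have "\<dots> = (a - b) * real (n - \<tau>) * \<beta>"
    using assms by (simp add: algebra_simps)
  finally show ?thesis
    by (simp add: \<beta>_def)
qed

lemma vdot_mean_vec_after_change:
  assumes "1 \<le> \<tau>" "\<tau> \<le> t" "t < n"
  shows "vdot n t (mean_vec (\<tau>, a, b)) = (a - b) * real \<tau> * sqrt (real (n - t) / (real t * real n))"
proof -
  define \<alpha> where "\<alpha> = sqrt (real (n - t) / (real t * real n))"
  define \<beta> where "\<beta> = sqrt (real t / (real (n - t) * real n))"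
  have balance: "real (n - t) * \<beta> = real t * \<alpha>"
    unfolding \<alpha>_def \<beta>_def using cusum_weight_balance assms by simp
  have "(\<Sum>i=1..t. \<alpha> * mean_vec (\<tau>, a, b) i)
      = (\<Sum>i=1..\<tau>. \<alpha> * mean_vec (\<tau>, a, b) i) + (\<Sum>i=\<tau>+1..t. \<alpha> * mean_vec (\<tau>, a, b) i)"
    using sum.ub_add_nat[of 1 \<tau> "\<lambda>i. \<alpha> * mean_vec (\<tau>, a, b) i" "t - \<tau>"] assms by simp
  also have "(\<Sum>i=1..\<tau>. \<alpha> * mean_vec (\<tau>, a, b) i) = real \<tau> * \<alpha> * a"
    by (subst sum.cong[of _ _ _ "\<lambda>_. \<alpha> * a"]) (auto simp: mean_vec_def)
  also have "(\<Sum>i=\<tau>+1..t. \<alpha> * mean_vec (\<tau>, a, b) i) = real (t - \<tau>) * \<alpha> * b"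
    by (subst sum.cong[of _ _ _ "\<lambda>_. \<alpha> * b"]) (auto simp: mean_vec_def)
  finally have left: "(\<Sum>i=1..t. \<alpha> * mean_vec (\<tau>, a, b) i) = real \<tau> * \<alpha> * a + real (t - \<tau>) * \<alpha> * b" .
  have right: "(\<Sum>i=t+1..n. \<beta> * mean_vec (\<tau>, a, b) i) = real (n - t) * \<beta> * b"
    using assms by (subst sum.cong[of _ _ _ "\<lambda>_. \<beta> * b"]) (auto simp: mean_vec_def)
  have "vdot n t (mean_vec (\<tau>, a, b)) = real \<tau> * \<alpha> * a + real (t - \<tau>) * \<alpha> * b - real t * \<alpha> * b"
    unfolding vdot_def left right \<alpha>_def[symmetric] \<beta>_def[symmetric] mult.assoc balance ..
  also have "\<dots> = (a - b) * real \<tau> * \<alpha>"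
    using assms by (simp add: algebra_simps)
  finally show ?thesis
    by (simp add: \<alpha>_def)
qed

lemma vdot_mean_vec_no_change:
  assumes "1 \<le> t" "t < n" "1 \<le> \<tau>" "\<tau> < n"
  shows "vdot n t (mean_vec (\<tau>, a, a)) = 0"
proof (cases "t \<le> \<tau>")
  case True
  then show ?thesis
    using vdot_mean_vec_before_change[of t \<tau> n a a] assms by simp
next
  case False
  then show ?thesis
    using vdot_mean_vec_after_change[of \<tau> t n a a] assms by simp
qed

section \<open>The dyadic grid\<close>

lemma obtain_dyadic_scale:
  assumes "n \<ge> 2"
  obtains K where "1 \<le> K" "2 ^ K \<le> n" "n < 2 ^ (K + 1)" "\<lfloor>log 2 (real n)\<rfloor> = int K" "Qn n = K - 1"
proof -
  obtain K where K: "2 ^ K \<le> n" "n < 2 ^ (K + 1)"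
    using ex_power_ivl1[of 2 n] assms by auto
  have floor_log: "\<lfloor>log 2 (real n)\<rfloor> = int K"
    using floor_log_nat_eq_if[OF K] by simp
  have "K \<noteq> 0"
    using K assms by (cases K) auto
  moreover have "log 2 (real n / 2) = log 2 (real n) - 1"
    using assms by (simp add: log_divide)
  ultimately have "Qn n = K - 1"
    using floor_log by (simp add: Qn_def)
  with K floor_log \<open>K \<noteq> 0\<close> show ?thesis
    using that by simp
qed

lemma T0_eq_image: "T0 n = (\<lambda>q. 2 ^ q) ` {..Qn n} \<union> (\<lambda>q. n - 2 ^ q) ` {..Qn n}"
  unfolding T0_def by auto

lemma finite_T0: "finite (T0 n)"
  by (simp add: T0_eq_image)

lemma one_in_T0: "1 \<in> T0 n"
  unfolding T0_def by (auto intro!: exI[of _ 0])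

lemma card_T0_le:
  assumes "n \<ge> 2"
  shows "real (card (T0 n)) \<le> 2 * real_of_int \<lfloor>log 2 (real n)\<rfloor>"
proof -
  obtain K where "1 \<le> K" "\<lfloor>log 2 (real n)\<rfloor> = int K" "Qn n = K - 1"
    using obtain_dyadic_scale[OF assms] by metis
  moreover have "card (T0 n) \<le> card {..Qn n} + card {..Qn n}"
    unfolding T0_eq_image by (intro card_Un_le[THEN order_trans] add_mono card_image_le) auto
  ultimately show ?thesis
    by simp
qed

lemma dyadic_in_T0:
  assumes "n \<ge> 2" "2 * 2 ^ q \<le> n"
  shows "2 ^ q \<in> T0 n" "n - 2 ^ q \<in> T0 n"
proof -
  obtain K where K: "n < 2 ^ (K + 1)" "Qn n = K - 1"
    using obtain_dyadic_scale[OF assms(1)] by metis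
  moreover have "(2::nat) ^ (q + 1) \<le> n"
    using assms(2) by simp
  ultimately have "(2::nat) ^ (q + 1) < 2 ^ (K + 1)"
    by linarith
  then have "q \<le> Qn n"
    using K by simp
  then show "2 ^ q \<in> T0 n" "n - 2 ^ q \<in> T0 n"
    unfolding T0_def by auto
qed

lemma T0_bounds:
  assumes "n \<ge> 2" "t \<in> T0 n"
  shows "1 \<le> t" "t < n"
proof -
  obtain q where q: "q \<le> Qn n" "t = 2 ^ q \<or> t = n - 2 ^ q"
    using assms(2) unfolding T0_def by auto
  obtain K where K: "1 \<le> K" "2 ^ K \<le> n" "Qn n = K - 1"
    using obtain_dyadic_scale[OF assms(1)] by metis
  have "(2::nat) ^ q \<le> 2 ^ (K - 1)"
    using q K by (intro power_increasing) auto
  also have "2 * \<dots> = 2 ^ K"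
    using K by (cases K) auto
  finally have "2 * 2 ^ q \<le> n"
    using K by linarith
  moreover have "1 \<le> t \<and> t < n" if "1 \<le> p" "2 * p \<le> n" "t = p \<or> t = n - p" for p
    using that by auto
  moreover have "1 \<le> (2::nat) ^ q"
    by simp
  ultimately show "1 \<le> t" "t < n"
    using q(2) by blast+
qed

lemma dyadic_cusum_ratio:
  fixes N T t :: real
  assumes "0 \<le> T" "T \<le> 2 * t" "2 * T \<le> N" "t < N"
  shows "T * (N - T) / (3 * N) \<le> (N - T)\<^sup>2 * t / ((N - t) * N)"
proof -
  have "(T / 2) * (3 * N - 2 * T) \<le> t * (3 * N - 2 * T)"
    using assms by (intro mult_right_mono) auto
  moreover have "0 \<le> T * (N - 2 * T)"
    using assms by simp
  ultimately have "T * (N - t) \<le> 3 * (N - T) * t"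
    by (simp add: algebra_simps)
  then have "0 \<le> (N - T) / (3 * N * (N - t)) * (3 * (N - T) * t - T * (N - t))"
    using assms by (intro mult_nonneg_nonneg divide_nonneg_pos) auto
  also have "\<dots> = (N - T)\<^sup>2 * t / ((N - t) * N) - T * (N - T) / (3 * N)"
    using assms by (simp add: power2_eq_square field_simps)
  finally show ?thesis
    by simp
qed

lemma exists_T0_cusum_signal:
  assumes n: "n \<ge> 2" and \<tau>: "1 \<le> \<tau>" "\<tau> < n"
  shows "\<exists>t\<in>T0 n.
    (a - b)\<^sup>2 * (real \<tau> * real (n - \<tau>) / (3 * real n)) \<le> (vdot n t (mean_vec (\<tau>, a, b)))\<^sup>2"
proof (cases "2 * \<tau> \<le> n")
  case True
  obtain q where q: "2 ^ q \<le> \<tau>" "\<tau> < 2 ^ (q + 1)"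
    using ex_power_ivl1[of 2 \<tau>] \<tau> by auto
  define t where "t = (2::nat) ^ q"
  have t: "t \<in> T0 n" "1 \<le> t" "t \<le> \<tau>" "\<tau> < 2 * t"
    unfolding t_def using dyadic_in_T0(1)[OF n, of q] q True by auto
  have contrast: "(vdot n t (mean_vec (\<tau>, a, b)))\<^sup>2
      = (a - b)\<^sup>2 * ((real n - real \<tau>)\<^sup>2 * real t / ((real n - real t) * real n))"
    using vdot_mean_vec_before_change[of t \<tau> n a b] t \<tau> by (simp add: power_mult_distrib of_nat_diff)
  have ratio: "real \<tau> * (real n - real \<tau>) / (3 * real n)
      \<le> (real n - real \<tau>)\<^sup>2 * real t / ((real n - real t) * real n)"
    using t True \<tau> by (intro dyadic_cusum_ratio) auto
  show ?thesis
    using t \<tau> contrast mult_left_mono[OF ratio, of "(a - b)\<^sup>2"]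
    by (intro bexI[of _ t]) (simp_all add: of_nat_diff)
next
  case False
  have "1 \<le> n - \<tau>"
    using \<tau> by simp
  then obtain q where q: "2 ^ q \<le> n - \<tau>" "n - \<tau> < 2 ^ (q + 1)"
    using ex_power_ivl1[of 2 "n - \<tau>"] by auto
  define t where "t = n - (2::nat) ^ q"
  have t: "t \<in> T0 n" "\<tau> \<le> t" "t < n"
    unfolding t_def using dyadic_in_T0(2)[OF n, of q] q False \<tau> by auto
  have contrast: "(vdot n t (mean_vec (\<tau>, a, b)))\<^sup>2
      = (a - b)\<^sup>2 * ((real \<tau>)\<^sup>2 * (real n - real t) / (real t * real n))"
    using vdot_mean_vec_after_change[of \<tau> t n a b] t \<tau> by (simp add: power_mult_distrib of_nat_diff)
  have "n - \<tau> \<le> 2 * (n - t)"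
    using q t by (simp add: t_def)
  then have gap: "real (n - \<tau>) \<le> 2 * real (n - t)"
    by (metis of_nat_le_iff of_nat_mult of_nat_numeral)
  \<comment> \<open>the first case mirrored by \<open>\<tau> \<mapsto> n - \<tau>\<close>, \<open>t \<mapsto> n - t\<close>\<close>
  have "(real n - real \<tau>) * (real n - (real n - real \<tau>)) / (3 * real n)
      \<le> (real n - (real n - real \<tau>))\<^sup>2 * (real n - real t) / ((real n - (real n - real t)) * real n)"
    using t False \<tau> gap by (intro dyadic_cusum_ratio) (auto simp: of_nat_diff)
  then have ratio: "real \<tau> * (real n - real \<tau>) / (3 * real n)
      \<le> (real \<tau>)\<^sup>2 * (real n - real t) / (real t * real n)"
    by (simp add: mult.commute)
  show ?thesis
    using t \<tau> contrast mult_left_mono[OF ratio, of "(a - b)\<^sup>2"]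
    by (intro bexI[of _ t]) (simp_all add: of_nat_diff)
qed

section \<open>Error probabilities of the classifier\<close>

lemma h_cusum_iff: "h_cusum n lam x \<longleftrightarrow> (\<exists>t\<in>T0 n. lam < \<bar>vdot n t x\<bar>)"
proof -
  have "finite ((\<lambda>t. \<bar>vdot n t x\<bar>) ` T0 n)" "(\<lambda>t. \<bar>vdot n t x\<bar>) ` T0 n \<noteq> {}"
    using finite_T0 one_in_T0 by auto
  then show ?thesis
    unfolding h_cusum_def by (simp add: Max_gr_iff)
qed

lemma measurable_vdot[measurable]:
  assumes "t \<le> n"
  shows "vdot n t \<in> borel_measurable (obs_space n)"
proof -
  have "(\<lambda>x. \<Sum>i\<in>{1..n}. cusum_weight n t i * x i) \<in> borel_measurable (obs_space n)"
    unfolding obs_space_def by measurable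
  moreover have "vdot n t = (\<lambda>x. \<Sum>i\<in>{1..n}. cusum_weight n t i * x i)"
    using vdot_eq_sum_cusum_weight[OF assms] by blast
  ultimately show ?thesis
    by simp
qed

lemma sets_std_gauss_noise: "sets (std_gauss_noise {1..n}) = sets (obs_space n)"
  unfolding std_gauss_noise_def obs_space_def by (intro sets_PiM_cong) simp_all

lemma sets_vdot_exceeds:
  assumes "t \<le> n"
  shows "{z \<in> space (std_gauss_noise {1..n}). c < \<bar>vdot n t z\<bar>} \<in> sets (std_gauss_noise {1..n})"
proof -
  have [measurable]: "vdot n t \<in> borel_measurable (std_gauss_noise {1..n})"
    using measurable_vdot[OF assms] unfolding measurable_cong_sets[OF sets_std_gauss_noise refl] .
  show ?thesis
    by measurable
qed

lemma cusum_false_alarm_le: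
  assumes n: "n \<ge> 2" and "0 \<le> lam" and null: "\<And>t. t \<in> T0 n \<Longrightarrow> vdot n t (mean_vec \<theta>) = 0"
  shows "emeasure (std_gauss_noise {1..n})
      {z \<in> space (std_gauss_noise {1..n}). h_cusum n lam (signal_plus_noise n \<theta> z)}
    \<le> card (T0 n) * exp (- lam\<^sup>2 / 2)"
proof -
  let ?Z = "std_gauss_noise {1..n}"
  define E where "E t = {z \<in> space ?Z. lam < \<bar>vdot n t z\<bar>}" for t
  have E_sets: "E t \<in> sets ?Z" if "t \<in> T0 n" for t
    unfolding E_def using T0_bounds[OF n that] by (intro sets_vdot_exceeds) simp
  have "vdot n t (signal_plus_noise n \<theta> z) = vdot n t z" if "t \<in> T0 n" for t z
    using T0_bounds[OF n that] null[OF that] by (simp add: vdot_signal_plus_noise)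
  then have "{z \<in> space ?Z. h_cusum n lam (signal_plus_noise n \<theta> z)} = (\<Union>t\<in>T0 n. E t)"
    by (auto simp: h_cusum_iff E_def)
  also have "emeasure ?Z \<dots> \<le> (\<Sum>t\<in>T0 n. emeasure ?Z (E t))"
    using E_sets by (intro emeasure_subadditive_finite finite_T0) auto
  also have "\<dots> \<le> (\<Sum>t\<in>T0 n. ennreal (exp (- lam\<^sup>2 / 2)))"
    unfolding E_def using T0_bounds[OF n] \<open>0 \<le> lam\<close> by (intro sum_mono cusum_noise_tail) auto
  also have "\<dots> = card (T0 n) * exp (- lam\<^sup>2 / 2)"
    by (simp add: ennreal_mult ennreal_of_nat_eq_real_of_nat)
  finally show ?thesis .
qed

lemma cusum_miss_le:
  assumes n: "n \<ge> 2" and "0 \<le> lam" and t: "t \<in> T0 n" and signal: "2 * lam < \<bar>vdot n t (mean_vec \<theta>)\<bar>"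
  shows "emeasure (std_gauss_noise {1..n})
      {z \<in> space (std_gauss_noise {1..n}). \<not> h_cusum n lam (signal_plus_noise n \<theta> z)}
    \<le> exp (- lam\<^sup>2 / 2)"
proof -
  let ?Z = "std_gauss_noise {1..n}"
  have t_range: "1 \<le> t" "t < n"
    using T0_bounds[OF n t] by auto
  have "{z \<in> space ?Z. \<not> h_cusum n lam (signal_plus_noise n \<theta> z)} \<subseteq> {z \<in> space ?Z. lam < \<bar>vdot n t z\<bar>}"
    using t t_range signal by (auto simp: h_cusum_iff vdot_signal_plus_noise)
  then have "emeasure ?Z {z \<in> space ?Z. \<not> h_cusum n lam (signal_plus_noise n \<theta> z)}
      \<le> emeasure ?Z {z \<in> space ?Z. lam < \<bar>vdot n t z\<bar>}"
    using t_range by (intro emeasure_mono sets_vdot_exceeds) auto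
  also have "\<dots> \<le> exp (- lam\<^sup>2 / 2)"
    using t_range \<open>0 \<le> lam\<close> by (rule cusum_noise_tail)
  finally show ?thesis .
qed

lemma Theta_changepoint_bounds:
  assumes "(\<tau>, a, b) \<in> Theta n B"
  shows "1 \<le> \<tau>" "\<tau> < n"
  using assms by (auto simp: Theta_def)

lemma Theta_jump_gt:
  assumes "(\<tau>, a, b) \<in> Theta n B" "a \<noteq> b" "0 \<le> B"
  shows "B\<^sup>2 < (a - b)\<^sup>2 * (real \<tau> * real (n - \<tau>)) / (real n)\<^sup>2"
proof -
  define s where "s = \<bar>a - b\<bar> * sqrt (real \<tau> * real (n - \<tau>)) / real n"
  have "s \<noteq> 0"
    using assms(2) Theta_changepoint_bounds[OF assms(1)] by (simp add: s_def)
  then have "B < s"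
    using assms(1) by (auto simp: Theta_def s_def Let_def)
  then have "B\<^sup>2 < s\<^sup>2"
    using assms(3) by (intro power_strict_mono) auto
  also have "s\<^sup>2 = (a - b)\<^sup>2 * (real \<tau> * real (n - \<tau>)) / (real n)\<^sup>2"
    by (simp add: s_def power_divide power_mult_distrib)
  finally show ?thesis .
qed

lemma cusum_detects_change:
  assumes n: "n \<ge> 2" and "0 \<le> B" and \<theta>: "(\<tau>, a, b) \<in> Theta n B" and "a \<noteq> b"
  shows "\<exists>t\<in>T0 n. 2 * (B * sqrt (3 * real n) / 6) < \<bar>vdot n t (mean_vec (\<tau>, a, b))\<bar>"
proof -
  obtain t where t: "t \<in> T0 n"
    and signal: "(a - b)\<^sup>2 * (real \<tau> * real (n - \<tau>) / (3 * real n)) \<le> (vdot n t (mean_vec (\<tau>, a, b)))\<^sup>2"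
    using exists_T0_cusum_signal[OF n Theta_changepoint_bounds[OF \<theta>]] by blast
  have rescale: "D * P / N\<^sup>2 * (N / 3) = D * (P / (3 * N))" if "0 < N" for D P N :: real
    using that by (simp add: power2_eq_square)
  have "(2 * (B * sqrt (3 * real n) / 6))\<^sup>2 = B\<^sup>2 * (real n / 3)"
    by (simp add: power_divide power_mult_distrib)
  also have "\<dots> < (a - b)\<^sup>2 * (real \<tau> * real (n - \<tau>)) / (real n)\<^sup>2 * (real n / 3)"
    using n by (intro mult_strict_right_mono Theta_jump_gt[OF \<theta> \<open>a \<noteq> b\<close> \<open>0 \<le> B\<close>]) simp
  also have "\<dots> = (a - b)\<^sup>2 * (real \<tau> * real (n - \<tau>) / (3 * real n))"
    using n by (intro rescale) simp
  also have "\<dots> \<le> \<bar>vdot n t (mean_vec (\<tau>, a, b))\<bar>\<^sup>2"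
    using signal by simp
  finally have "2 * (B * sqrt (3 * real n) / 6) < \<bar>vdot n t (mean_vec (\<tau>, a, b))\<bar>"
    by (rule power2_less_imp_less) simp
  then show ?thesis
    using t by blast
qed

lemma cusum_error_le_card:
  assumes n: "n \<ge> 2" and lam: "0 \<le> lam" "lam \<le> B * sqrt (3 * real n) / 6" and \<theta>: "\<theta> \<in> Theta n B"
  shows "emeasure (std_gauss_noise {1..n})
      {z \<in> space (std_gauss_noise {1..n}). h_cusum n lam (signal_plus_noise n \<theta> z) \<noteq> label \<theta>}
    \<le> card (T0 n) * exp (- lam\<^sup>2 / 2)"
proof -
  obtain \<tau> a b where \<theta>_eq: "\<theta> = (\<tau>, a, b)"
    by (cases \<theta>)
  show ?thesis
  proof (cases "a = b")
    case True
    have "vdot n t (mean_vec \<theta>) = 0" if "t \<in> T0 n" for t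
      using True T0_bounds[OF n that] Theta_changepoint_bounds[OF \<theta>[unfolded \<theta>_eq]]
      by (simp add: \<theta>_eq vdot_mean_vec_no_change)
    then show ?thesis
      using cusum_false_alarm_le[OF n lam(1)] True by (simp add: \<theta>_eq label_def)
  next
    case False
    have "0 \<le> B * sqrt (3 * real n) / 6"
      using lam by linarith
    then have "0 \<le> B"
      using n by (simp add: zero_le_mult_iff zero_le_divide_iff)
    then obtain t where t: "t \<in> T0 n" "2 * (B * sqrt (3 * real n) / 6) < \<bar>vdot n t (mean_vec \<theta>)\<bar>"
      using cusum_detects_change[OF n _ \<theta>[unfolded \<theta>_eq] False] by (auto simp: \<theta>_eq)
    then have "2 * lam < \<bar>vdot n t (mean_vec \<theta>)\<bar>"
      using lam(2) by linarith
    with t(1) have "emeasure (std_gauss_noise {1..n})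
        {z \<in> space (std_gauss_noise {1..n}). \<not> h_cusum n lam (signal_plus_noise n \<theta> z)} \<le> exp (- lam\<^sup>2 / 2)"
      using lam(1) by (intro cusum_miss_le[OF n])
    also have "\<dots> \<le> card (T0 n) * exp (- lam\<^sup>2 / 2)"
      using one_in_T0 finite_T0 by (intro ennreal_leI) (auto simp: Suc_le_eq card_gt_0_iff)
    finally show ?thesis
      using False by (simp add: \<theta>_eq label_def)
  qed
qed

lemma cusum_error_le:
  assumes n: "n \<ge> 2" and "B > 0" and \<theta>: "\<theta> \<in> Theta n B"
  shows "emeasure (std_gauss_noise {1..n})
      {z \<in> space (std_gauss_noise {1..n}). h_cusum n (B * sqrt (3 * real n) / 6) (signal_plus_noise n \<theta> z) \<noteq> label \<theta>}
    \<le> 2 * real_of_int \<lfloor>log 2 (real n)\<rfloor> * exp (- real n * B\<^sup>2 / 24)"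
proof -
  let ?lam = "B * sqrt (3 * real n) / 6"
  have tail: "exp (- ?lam\<^sup>2 / 2) = exp (- real n * B\<^sup>2 / 24)"
    by (simp add: power_divide power_mult_distrib)
  have "emeasure (std_gauss_noise {1..n})
      {z \<in> space (std_gauss_noise {1..n}). h_cusum n ?lam (signal_plus_noise n \<theta> z) \<noteq> label \<theta>}
    \<le> card (T0 n) * exp (- ?lam\<^sup>2 / 2)"
    using \<open>B > 0\<close> by (intro cusum_error_le_card[OF n _ order_refl \<theta>]) simp
  also have "\<dots> \<le> 2 * real_of_int \<lfloor>log 2 (real n)\<rfloor> * exp (- real n * B\<^sup>2 / 24)"
    unfolding tail using card_T0_le[OF n] by (intro ennreal_leI mult_right_mono) auto
  finally show ?thesis .
qed

section \<open>Averaging over the prior\<close>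

lemma space_param_space: "space param_space = UNIV"
  by (simp add: param_space_def space_pair_measure)

lemma measurable_mean_vec[measurable]: "(\<lambda>\<theta>. mean_vec \<theta> i) \<in> borel_measurable param_space"
proof -
  have "(\<lambda>\<theta>. mean_vec \<theta> i) = (\<lambda>\<theta>. if i \<le> fst \<theta> then fst (snd \<theta>) else snd (snd \<theta>))"
    by (auto simp: mean_vec_def split: prod.splits)
  then show ?thesis
    unfolding param_space_def by simp
qed

lemma measurable_label[measurable]: "label \<in> measurable param_space (count_space UNIV)"
proof -
  have label_eq: "label = (\<lambda>\<theta>. fst (snd \<theta>) \<noteq> snd (snd \<theta>))"
    by (auto simp: label_def split: prod.splits)
  show ?thesis
    unfolding label_eq param_space_def by measurable
qed

lemma measurable_h_cusum[measurable]:
  assumes "n \<ge> 2"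
  shows "h_cusum n lam \<in> measurable (obs_space n) (count_space UNIV)"
proof -
  have [measurable]: "vdot n t \<in> borel_measurable (obs_space n)" if "t \<in> T0 n" for t
    using T0_bounds[OF assms that] by (intro measurable_vdot) simp
  have "(\<lambda>x. Max ((\<lambda>t. \<bar>vdot n t x\<bar>) ` T0 n)) \<in> borel_measurable (obs_space n)"
    by (intro borel_measurable_Max finite_T0) measurable
  then show ?thesis
    unfolding h_cusum_def[abs_def] by measurable
qed

lemma joint_eq_bind_signal_plus_noise:
  assumes "sets \<pi>0 = sets param_space"
  shows "joint n \<pi>0 = \<pi>0 \<bind>
    (\<lambda>\<theta>. distr (std_gauss_noise {1..n}) (\<pi>0 \<Otimes>\<^sub>M obs_space n) (\<lambda>z. (\<theta>, signal_plus_noise n \<theta> z)))"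
  unfolding joint_def
proof (rule bind_cong[OF refl])
  fix \<theta> assume "\<theta> \<in> space \<pi>0"
  then have "distr (Pcp n \<theta>) (\<pi>0 \<Otimes>\<^sub>M obs_space n) (Pair \<theta>)
      = distr (std_gauss_noise {1..n}) (\<pi>0 \<Otimes>\<^sub>M obs_space n) (Pair \<theta> \<circ> signal_plus_noise n \<theta>)"
    unfolding Pcp_eq_distr_signal_plus_noise by (intro distr_distr measurable_signal_plus_noise) auto
  then show "distr (Pcp n \<theta>) (\<pi>0 \<Otimes>\<^sub>M obs_space n) (\<lambda>x. (\<theta>, x))
      = distr (std_gauss_noise {1..n}) (\<pi>0 \<Otimes>\<^sub>M obs_space n) (\<lambda>z. (\<theta>, signal_plus_noise n \<theta> z))"
    by (simp add: comp_def)
qed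

lemma measurable_signal_plus_noise_kernel:
  assumes "sets \<pi>0 = sets param_space"
  shows "(\<lambda>\<theta>. distr (std_gauss_noise {1..n}) (\<pi>0 \<Otimes>\<^sub>M obs_space n) (\<lambda>z. (\<theta>, signal_plus_noise n \<theta> z)))
    \<in> measurable \<pi>0 (subprob_algebra (\<pi>0 \<Otimes>\<^sub>M obs_space n))"
proof (rule measurable_distr2[where f = "\<lambda>\<theta> z. (\<theta>, signal_plus_noise n \<theta> z)"])
  have [measurable]: "(\<lambda>\<theta>. mean_vec \<theta> i) \<in> borel_measurable \<pi>0" for i
    unfolding measurable_cong_sets[OF assms refl] by (rule measurable_mean_vec)
  show "(\<lambda>(\<theta>, z). (\<theta>, signal_plus_noise n \<theta> z))
      \<in> measurable (\<pi>0 \<Otimes>\<^sub>M std_gauss_noise {1..n}) (\<pi>0 \<Otimes>\<^sub>M obs_space n)"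
    unfolding signal_plus_noise_def std_gauss_noise_def obs_space_def by measurable
  show "(\<lambda>_. std_gauss_noise {1..n}) \<in> measurable \<pi>0 (subprob_algebra (std_gauss_noise {1..n}))"
    by (intro measurable_const)
      (simp add: space_subprob_algebra prob_space_imp_subprob_space[OF prob_space_std_gauss_noise])
qed

lemma space_joint:
  assumes "sets \<pi>0 = sets param_space"
  shows "space (joint n \<pi>0) = space (\<pi>0 \<Otimes>\<^sub>M obs_space n)"
proof -
  have "space \<pi>0 \<noteq> {}"
    using sets_eq_imp_space_eq[OF assms] by (simp add: space_param_space)
  then show ?thesis
    unfolding joint_eq_bind_signal_plus_noise[OF assms]
    by (rule space_bind_measurable[OF measurable_signal_plus_noise_kernel[OF assms]])
qed

lemma emeasure_joint:
  assumes "sets \<pi>0 = sets param_space" and S: "S \<in> sets (\<pi>0 \<Otimes>\<^sub>M obs_space n)"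
  shows "emeasure (joint n \<pi>0) S = (\<integral>\<^sup>+\<theta>. emeasure (std_gauss_noise {1..n})
      {z \<in> space (std_gauss_noise {1..n}). (\<theta>, signal_plus_noise n \<theta> z) \<in> S} \<partial>\<pi>0)"
proof -
  have space: "space \<pi>0 = UNIV"
    using sets_eq_imp_space_eq[OF assms(1)] by (simp add: space_param_space)
  have kernel: "emeasure (distr (std_gauss_noise {1..n}) (\<pi>0 \<Otimes>\<^sub>M obs_space n)
        (\<lambda>z. (\<theta>, signal_plus_noise n \<theta> z))) S
      = emeasure (std_gauss_noise {1..n}) {z \<in> space (std_gauss_noise {1..n}). (\<theta>, signal_plus_noise n \<theta> z) \<in> S}" for \<theta>
  proof -
    have "(\<lambda>z. (\<theta>, signal_plus_noise n \<theta> z)) \<in> measurable (std_gauss_noise {1..n}) (\<pi>0 \<Otimes>\<^sub>M obs_space n)"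
      by (intro measurable_Pair measurable_const measurable_signal_plus_noise) (simp add: space)
    then show ?thesis
      using S by (simp add: emeasure_distr vimage_def Int_def conj_commute)
  qed
  have "emeasure (joint n \<pi>0) S = (\<integral>\<^sup>+\<theta>. emeasure (distr (std_gauss_noise {1..n})
      (\<pi>0 \<Otimes>\<^sub>M obs_space n) (\<lambda>z. (\<theta>, signal_plus_noise n \<theta> z))) S \<partial>\<pi>0)"
    unfolding joint_eq_bind_signal_plus_noise[OF assms(1)]
    by (rule emeasure_bind[OF _ measurable_signal_plus_noise_kernel[OF assms(1)] S]) (simp add: space)
  then show ?thesis
    by (simp only: kernel)
qed

lemma measure_joint_le:
  assumes "prob_space \<pi>0" "sets \<pi>0 = sets param_space"
    and [measurable]: "Measurable.pred (\<pi>0 \<Otimes>\<^sub>M obs_space n) (\<lambda>p. P (fst p) (snd p))"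
    and "0 \<le> c"
    and bound: "AE \<theta> in \<pi>0. emeasure (std_gauss_noise {1..n})
      {z \<in> space (std_gauss_noise {1..n}). P \<theta> (signal_plus_noise n \<theta> z)} \<le> c"
  shows "measure (joint n \<pi>0) {p \<in> space (joint n \<pi>0). P (fst p) (snd p)} \<le> c"
proof -
  interpret prob_space \<pi>0
    by fact
  let ?S = "{p \<in> space (\<pi>0 \<Otimes>\<^sub>M obs_space n). P (fst p) (snd p)}"
  have space: "space \<pi>0 = UNIV"
    using sets_eq_imp_space_eq[OF assms(2)] by (simp add: space_param_space)
  have "{z \<in> space (std_gauss_noise {1..n}). (\<theta>, signal_plus_noise n \<theta> z) \<in> ?S}
      = {z \<in> space (std_gauss_noise {1..n}). P \<theta> (signal_plus_noise n \<theta> z)}" for \<theta>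
    using measurable_space[OF measurable_signal_plus_noise[of n \<theta>]] by (auto simp: space space_pair_measure)
  then have "emeasure (joint n \<pi>0) ?S = (\<integral>\<^sup>+\<theta>. emeasure (std_gauss_noise {1..n})
      {z \<in> space (std_gauss_noise {1..n}). P \<theta> (signal_plus_noise n \<theta> z)} \<partial>\<pi>0)"
    by (simp add: emeasure_joint[OF assms(2)])
  also have "\<dots> \<le> (\<integral>\<^sup>+\<theta>. c \<partial>\<pi>0)"
    using bound by (rule nn_integral_mono_AE)
  also have "\<dots> = c"
    by (simp add: emeasure_space_1)
  finally show ?thesis
    unfolding measure_def space_joint[OF assms(2)] using \<open>0 \<le> c\<close> by (intro enn2real_leI)
qed

theorem corollaryA3:
  fixes n :: nat and B :: real and \<pi>0 :: "param measure"
  assumes "n \<ge> 2" and "B > 0"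
    and "prob_space \<pi>0" and "sets \<pi>0 = sets param_space"
    and "AE \<theta> in \<pi>0. \<theta> \<in> Theta n B"
  shows "measure (joint n \<pi>0)
           {p \<in> space (joint n \<pi>0). h_cusum n (B * sqrt (3 * real n) / 6) (snd p) \<noteq> label (fst p)}
         \<le> 2 * real_of_int \<lfloor>log 2 (real n)\<rfloor> * exp (- real n * B\<^sup>2 / 24)"
proof (rule measure_joint_le[OF assms(3,4),
    where P = "\<lambda>\<theta> x. h_cusum n (B * sqrt (3 * real n) / 6) x \<noteq> label \<theta>"])
  have [measurable]: "label \<in> measurable \<pi>0 (count_space UNIV)"
    unfolding measurable_cong_sets[OF assms(4) refl] by (rule measurable_label)
  note measurable_h_cusum[OF assms(1), measurable]
  show "Measurable.pred (\<pi>0 \<Otimes>\<^sub>M obs_space n)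
      (\<lambda>p. h_cusum n (B * sqrt (3 * real n) / 6) (snd p) \<noteq> label (fst p))"
    by measurable
  show "0 \<le> 2 * real_of_int \<lfloor>log 2 (real n)\<rfloor> * exp (- real n * B\<^sup>2 / 24)"
    using assms(1) by simp
  show "AE \<theta> in \<pi>0. emeasure (std_gauss_noise {1..n}) {z \<in> space (std_gauss_noise {1..n}).
      h_cusum n (B * sqrt (3 * real n) / 6) (signal_plus_noise n \<theta> z) \<noteq> label \<theta>}
    \<le> 2 * real_of_int \<lfloor>log 2 (real n)\<rfloor> * exp (- real n * B\<^sup>2 / 24)"
    using assms(5) by eventually_elim (rule cusum_error_le[OF assms(1,2)])
qed

end
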